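(* Let $\hat{x}$ be the final value of the vector $x$ in Algorithm 1 and let $OPT$ be a set maximizing $f$ among subsets of $N$ of size at most $k$. If $\|\hat{x}\|_1<k$, then $F(\hat{x}+\mathbf{1}_{OPT\setminus\mathrm{supp}(\hat{x})})\le F(\hat{x})+c\tau$.
   Context: Setting: finite ground set $N$ whose elements arrive one at a time in a stream, non-negative submodular $f\colon 2^N\to\mathbb{R}_{\ge 0}$, positive integer $k$. $\mathbf{1}_A$ is the characteristic vector of $A$. $F$ is the multilinear extension of $f$: $F(x)=\sum_{A\subseteq N} f(A)\prod_{u\in A}x_u\prod_{u\notin A}(1-x_u)$ for $x\in[0,1]^N$, and $\partial_uF(x)=F(x\vee \mathbf{1}_u)-F(x\wedge\mathbf{1}_{N\setminus\{u\}})$ (coordinatewise max/min). $\mathrm{supp}(x)=\{u: x_u>0\}$. Algorithm 1 has parameters $p\in(0,1)$, $c>0$, $\alpha\in(0,1]$ and a number $\tau$. It starts with $x=\mathbf{0}$, and when an element $u$ arrives, if $\partial_uF(x)\ge c\tau/k$ it sets $x\leftarrow x+\min\{p,\,k-\|x\|_1\}\cdot\mathbf{1}_u$ (otherwise $x$ is unchanged). After the stream ends, it computes a random set $S_1$ with $|S_1|\le k$ and $\mathbb{E}[f(S_1)]\ge F(x)$, and a random set $S_2\subseteq\mathrm{supp}(x)$ with $|S_2|\le k$ and $\mathbb{E}[f(S_2)]\ge\alpha\cdot\max_{S\subseteq\mathrm{supp}(x),|S|\le k}f(S)$, and outputs the better of $S_1,S_2$. *)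

theory Defs
  imports Complex_Main "HOL-Library.Indicator_Function"
begin

definition submodular_on :: "'a set \<Rightarrow> ('a set \<Rightarrow> real) \<Rightarrow> bool" where
  "submodular_on N f \<longleftrightarrow>
     (\<forall>A B. A \<subseteq> N \<longrightarrow> B \<subseteq> N \<longrightarrow> f (A \<union> B) + f (A \<inter> B) \<le> f A + f B)"

definition multilinear_ext :: "'a set \<Rightarrow> ('a set \<Rightarrow> real) \<Rightarrow> ('a \<Rightarrow> real) \<Rightarrow> real" where
  "multilinear_ext N f x =
     (\<Sum>A\<in>Pow N. f A * (\<Prod>u\<in>A. x u) * (\<Prod>u\<in>N - A. 1 - x u))"

definition partial_F :: "'a set \<Rightarrow> ('a set \<Rightarrow> real) \<Rightarrow> ('a \<Rightarrow> real) \<Rightarrow> 'a \<Rightarrow> real" where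
  "partial_F N f x u =
     multilinear_ext N f (sup x (indicator {u})) - multilinear_ext N f (inf x (indicator (N - {u})))"

definition norm1 :: "'a set \<Rightarrow> ('a \<Rightarrow> real) \<Rightarrow> real" where
  "norm1 N x = (\<Sum>u\<in>N. \<bar>x u\<bar>)"

definition supp :: "'a set \<Rightarrow> ('a \<Rightarrow> real) \<Rightarrow> 'a set" where
  "supp N x = {u \<in> N. x u > 0}"

definition alg1_step :: "'a set \<Rightarrow> ('a set \<Rightarrow> real) \<Rightarrow> nat \<Rightarrow> real \<Rightarrow> real \<Rightarrow> real
    \<Rightarrow> ('a \<Rightarrow> real) \<Rightarrow> 'a \<Rightarrow> ('a \<Rightarrow> real)" where
  "alg1_step N f k p c \<tau> x u =
     (if partial_F N f x u \<ge> c * \<tau> / real k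
      then (\<lambda>v. x v + min p (real k - norm1 N x) * indicator {u} v)
      else x)"

definition alg1_x :: "'a set \<Rightarrow> ('a set \<Rightarrow> real) \<Rightarrow> nat \<Rightarrow> real \<Rightarrow> real \<Rightarrow> real
    \<Rightarrow> 'a list \<Rightarrow> ('a \<Rightarrow> real)" where
  "alg1_x N f k p c \<tau> stream = foldl (alg1_step N f k p c \<tau>) (\<lambda>_. 0) stream"

end

theory Submission
  imports Defs
begin

text \<open>Every u in OPT \ supp x was rejected on arrival: as the final norm is below k, accepting u
would have made its coordinate positive. Hence the partial derivative in direction u was below
c \<tau> / k at the vector current at that time, which lies below the final x. Submodularity makes the
partial derivatives of F antitone (the multilinear extension of an antitone set function is
antitone), so they are below c \<tau> / k at x as well. Raising the coordinates of OPT \ supp x to 1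
one at a time, each increment of F is bounded, again by antitonicity, by the partial derivative at x,
and there are at most k of them.\<close>

lemma sum_Pow_insert:
  assumes "finite M" "v \<notin> M"
  shows "(\<Sum>A\<in>Pow (insert v M). g A) = (\<Sum>A\<in>Pow M. g A + g (insert v A))"
proof -
  have "inj_on (insert v) (Pow M)"
    using assms(2) by (intro inj_onI) (metis PowD Diff_insert_absorb subsetD)
  moreover have "Pow M \<inter> insert v ` Pow M = {}"
    using assms(2) by auto
  ultimately show ?thesis
    unfolding Pow_insert using assms(1)
    by (simp add: sum.union_disjoint sum.reindex sum.distrib)
qed

lemma multilinear_ext_cong:
  assumes "\<And>u. u \<in> N \<Longrightarrow> x u = y u"
  shows "multilinear_ext N f x = multilinear_ext N f y"
  unfolding multilinear_ext_def
  by (intro sum.cong refl arg_cong2[where f = "(*)"] arg_cong[where f = "(*) _"] prod.cong)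
     (use assms in auto)

lemma multilinear_ext_insert:
  assumes "finite M" "v \<notin> M"
  shows "multilinear_ext (insert v M) f x =
         multilinear_ext M (\<lambda>A. (1 - x v) * f A + x v * f (insert v A)) x"
  unfolding multilinear_ext_def sum_Pow_insert[OF assms]
proof (rule sum.cong[OF refl])
  fix A assume "A \<in> Pow M"
  then have A: "A \<subseteq> M" "finite A" "v \<notin> A" using assms finite_subset by auto
  have "insert v M - A = insert v (M - A)" "insert v M - insert v A = M - A"
    using A assms(2) by auto
  then show "f A * prod x A * (\<Prod>u\<in>insert v M - A. 1 - x u)
      + f (insert v A) * prod x (insert v A) * (\<Prod>u\<in>insert v M - insert v A. 1 - x u)
    = ((1 - x v) * f A + x v * f (insert v A)) * prod x A * (\<Prod>u\<in>M - A. 1 - x u)"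
    using A assms by (simp add: algebra_simps)
qed

lemma multilinear_ext_diff:
  "multilinear_ext N g x - multilinear_ext N h x = multilinear_ext N (\<lambda>A. g A - h A) x"
  unfolding multilinear_ext_def by (simp add: sum_subtractf[symmetric] algebra_simps)

lemma multilinear_ext_mono_fun:
  assumes "\<And>A. A \<subseteq> N \<Longrightarrow> g A \<le> h A" "\<And>u. u \<in> N \<Longrightarrow> 0 \<le> x u \<and> x u \<le> 1"
  shows "multilinear_ext N g x \<le> multilinear_ext N h x"
  unfolding multilinear_ext_def mult.assoc
  using assms by (intro sum_mono mult_right_mono mult_nonneg_nonneg prod_nonneg) auto

lemma multilinear_ext_antimono:
  assumes "finite M" "\<And>A B. A \<subseteq> B \<Longrightarrow> B \<subseteq> M \<Longrightarrow> h B \<le> h A"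
    and "\<And>u. u \<in> M \<Longrightarrow> 0 \<le> x u \<and> x u \<le> y u \<and> y u \<le> 1"
  shows "multilinear_ext M h y \<le> multilinear_ext M h x"
  using assms
proof (induction M arbitrary: h rule: finite_induct)
  case empty
  then show ?case by (simp add: multilinear_ext_def)
next
  case (insert v M)
  define h_at where "h_at t A = (1 - t) * h A + t * h (insert v A)" for t A
  have v: "0 \<le> x v" "x v \<le> y v" "y v \<le> 1" using insert.prems(2) by auto
  have "multilinear_ext M (h_at (y v)) y \<le> multilinear_ext M (h_at (y v)) x"
  proof (rule insert.IH)
    fix A B assume "A \<subseteq> B" "B \<subseteq> M"
    then have "h B \<le> h A" "h (insert v B) \<le> h (insert v A)"
      using insert.prems(1) by (meson insert_mono subset_insertI2)+
    then show "h_at (y v) B \<le> h_at (y v) A"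
      unfolding h_at_def using v by (intro add_mono mult_left_mono) auto
  qed (use insert.prems(2) in auto)
  also have "\<dots> \<le> multilinear_ext M (h_at (x v)) x"
  proof (rule multilinear_ext_mono_fun)
    fix A assume "A \<subseteq> M"
    then have "h (insert v A) \<le> h A" using insert.prems(1) by blast
    then have "(y v - x v) * (h (insert v A) - h A) \<le> 0"
      using v by (intro mult_nonneg_nonpos) auto
    then show "h_at (y v) A \<le> h_at (x v) A" unfolding h_at_def by (simp add: algebra_simps)
  qed (use insert.prems(2) in force)
  finally show ?case
    unfolding multilinear_ext_insert[OF insert.hyps] h_at_def .
qed

lemma multilinear_ext_fun_upd_diff:
  assumes "finite N" "u \<in> N"
  shows "multilinear_ext N f (x(u := 1)) - multilinear_ext N f (x(u := 0))
       = multilinear_ext (N - {u}) (\<lambda>A. f (insert u A) - f A) x"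
proof -
  have "multilinear_ext N f (x(u := t)) =
        multilinear_ext (N - {u}) (\<lambda>A. (1 - t) * f A + t * f (insert u A)) x" for t
  proof -
    have "multilinear_ext N f (x(u := t)) = multilinear_ext (insert u (N - {u})) f (x(u := t))"
      using assms(2) by (simp add: insert_absorb)
    also have "\<dots> = multilinear_ext (N - {u}) (\<lambda>A. (1 - t) * f A + t * f (insert u A)) (x(u := t))"
      using multilinear_ext_insert[of "N - {u}" u f "x(u := t)"] assms(1) by simp
    also have "\<dots> = multilinear_ext (N - {u}) (\<lambda>A. (1 - t) * f A + t * f (insert u A)) x"
      by (rule multilinear_ext_cong) simp
    finally show ?thesis .
  qed
  then show ?thesis by (simp add: multilinear_ext_diff)
qed

lemma partial_F_eq_fun_upd:
  assumes "u \<in> N" "\<And>w. w \<in> N \<Longrightarrow> 0 \<le> x w \<and> x w \<le> 1"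
  shows "partial_F N f x u = multilinear_ext N f (x(u := 1)) - multilinear_ext N f (x(u := 0))"
proof -
  have "multilinear_ext N f (sup x (indicator {u})) = multilinear_ext N f (x(u := 1))"
    "multilinear_ext N f (inf x (indicator (N - {u}))) = multilinear_ext N f (x(u := 0))"
    using assms by (auto intro!: multilinear_ext_cong simp: indicator_def sup_real_def inf_real_def)
  then show ?thesis unfolding partial_F_def by simp
qed

lemma submodular_on_insert_antimono:
  assumes "submodular_on N f" "u \<in> N" "A \<subseteq> B" "B \<subseteq> N - {u}"
  shows "f (insert u B) - f B \<le> f (insert u A) - f A"
proof -
  have "insert u A \<union> B = insert u B" "insert u A \<inter> B = A" "insert u A \<subseteq> N" "B \<subseteq> N"
    using assms(2-4) by auto
  then have "f (insert u B) + f A \<le> f (insert u A) + f B"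
    using assms(1) unfolding submodular_on_def by metis
  then show ?thesis by simp
qed

lemma partial_F_antimono:
  assumes "finite N" "submodular_on N f" "u \<in> N"
    and "\<And>w. w \<in> N \<Longrightarrow> 0 \<le> x w \<and> x w \<le> y w \<and> y w \<le> 1"
  shows "partial_F N f y u \<le> partial_F N f x u"
proof -
  have "partial_F N f z u = multilinear_ext (N - {u}) (\<lambda>A. f (insert u A) - f A) z"
    if "\<And>w. w \<in> N \<Longrightarrow> 0 \<le> z w \<and> z w \<le> 1" for z
    using partial_F_eq_fun_upd[OF assms(3) that] multilinear_ext_fun_upd_diff[OF assms(1,3)]
    by simp
  moreover have "\<And>w. w \<in> N \<Longrightarrow> 0 \<le> x w \<and> x w \<le> 1" "\<And>w. w \<in> N \<Longrightarrow> 0 \<le> y w \<and> y w \<le> 1"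
    using assms(4) by force+
  moreover have "multilinear_ext (N - {u}) (\<lambda>A. f (insert u A) - f A) y
      \<le> multilinear_ext (N - {u}) (\<lambda>A. f (insert u A) - f A) x"
    using assms by (intro multilinear_ext_antimono submodular_on_insert_antimono) auto
  ultimately show ?thesis by simp
qed

lemma multilinear_ext_add_indicator_le:
  assumes "finite N" "submodular_on N f" "S \<subseteq> N"
    and "\<And>w. w \<in> N \<Longrightarrow> 0 \<le> x w \<and> x w \<le> 1" and "\<And>w. w \<in> S \<Longrightarrow> x w = 0"
  shows "multilinear_ext N f (\<lambda>w. x w + indicator S w)
       \<le> multilinear_ext N f x + (\<Sum>u\<in>S. partial_F N f x u)"
proof -
  have "finite S" using assms(1,3) finite_subset by auto
  then show ?thesis using assms(3,5)
  proof (induction S rule: finite_induct)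
    case empty
    then show ?case by simp
  next
    case (insert v S)
    define z where "z w = x w + indicator S w" for w
    have "v \<in> N" "x v = 0" using insert.prems by auto
    have z: "0 \<le> x w \<and> x w \<le> z w \<and> z w \<le> 1" if "w \<in> N" for w
      using assms(4)[OF that] insert.prems(2)[of w] unfolding z_def by (cases "w \<in> S") auto
    have "(\<lambda>w. x w + indicator (insert v S) w) = z(v := 1)" "z = z(v := 0)"
      using \<open>x v = 0\<close> insert.hyps(2) by (auto simp: z_def indicator_def)
    then have "multilinear_ext N f (\<lambda>w. x w + indicator (insert v S) w)
        = multilinear_ext N f z + partial_F N f z v"
      using partial_F_eq_fun_upd[OF \<open>v \<in> N\<close>, of z f] z by force
    also have "partial_F N f z v \<le> partial_F N f x v"
      by (rule partial_F_antimono[OF assms(1,2) \<open>v \<in> N\<close> z])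
    also have "multilinear_ext N f z \<le> multilinear_ext N f x + (\<Sum>u\<in>S. partial_F N f x u)"
      unfolding z_def using insert.prems by (intro insert.IH) auto
    finally show ?case using insert.hyps by simp
  qed
qed

lemma norm1_mono:
  assumes "\<And>w. 0 \<le> x w" "x \<le> y"
  shows "norm1 N x \<le> norm1 N y"
proof -
  have "\<bar>x w\<bar> \<le> \<bar>y w\<bar>" for w
    using assms(1)[of w] le_funD[OF assms(2), of w] by simp
  then show ?thesis unfolding norm1_def by (rule sum_mono)
qed

lemma alg1_step_other:
  "w \<noteq> u \<Longrightarrow> alg1_step N f k p c \<tau> x u w = x w"
  unfolding alg1_step_def by simp

lemma alg1_step_le:
  "0 \<le> p \<Longrightarrow> alg1_step N f k p c \<tau> x u u \<le> x u + p"
  unfolding alg1_step_def by simp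

lemma alg1_step_increasing:
  assumes "finite N" "0 < p" "\<And>w. 0 \<le> x w" "norm1 N x \<le> real k"
  shows "x \<le> alg1_step N f k p c \<tau> x u" "norm1 N (alg1_step N f k p c \<tau> x u) \<le> real k"
proof -
  define a where "a = min p (real k - norm1 N x)"
  have "0 \<le> a" "a \<le> real k - norm1 N x" using assms(2,4) by (auto simp: a_def)
  have "x \<le> (\<lambda>w. x w + a * indicator {u} w)"
    using \<open>0 \<le> a\<close> by (simp add: le_fun_def)
  moreover have "norm1 N (\<lambda>w. x w + a * indicator {u} w) = norm1 N x + a * indicator N u"
    using assms(1,3) \<open>0 \<le> a\<close> by (simp add: norm1_def sum.distrib indicator_def)
  ultimately show "x \<le> alg1_step N f k p c \<tau> x u" "norm1 N (alg1_step N f k p c \<tau> x u) \<le> real k"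
    using \<open>0 \<le> a\<close> \<open>a \<le> real k - norm1 N x\<close> assms(4)
    unfolding alg1_step_def a_def[symmetric] by (auto simp: indicator_def)
qed

lemma foldl_alg1_step_increasing:
  assumes "finite N" "0 < p" "\<And>w. 0 \<le> x w" "norm1 N x \<le> real k"
  shows "x \<le> foldl (alg1_step N f k p c \<tau>) x xs \<and> norm1 N (foldl (alg1_step N f k p c \<tau>) x xs) \<le> real k"
  using assms(3,4)
proof (induction xs arbitrary: x)
  case Nil
  then show ?case by simp
next
  case (Cons u xs)
  note step = alg1_step_increasing[OF assms(1,2) Cons.prems, of f c \<tau> u]
  have "\<And>w. 0 \<le> alg1_step N f k p c \<tau> x u w"
    using Cons.prems(1) le_funD[OF step(1)] order_trans by blast
  then show ?case using Cons.IH step by (auto intro: order_trans)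
qed

lemma foldl_alg1_step_le:
  "0 \<le> p \<Longrightarrow> distinct xs \<Longrightarrow> foldl (alg1_step N f k p c \<tau>) x xs w \<le> x w + p * of_bool (w \<in> set xs)"
proof (induction xs arbitrary: x)
  case Nil
  then show ?case by simp
next
  case (Cons u xs)
  then have "foldl (alg1_step N f k p c \<tau>) x (u # xs) w
      \<le> alg1_step N f k p c \<tau> x u w + p * of_bool (w \<in> set xs)"
    by simp
  also have "\<dots> \<le> x w + p * of_bool (w \<in> set (u # xs))"
    using Cons.prems alg1_step_le[of p N f k c \<tau> x u] by (cases "w = u") (auto simp: alg1_step_other)
  finally show ?case .
qed

lemma alg1_step_rejects:
  assumes "0 < p" "norm1 N x < real k" "alg1_step N f k p c \<tau> x u u \<le> x u"
  shows "partial_F N f x u < c * \<tau> / real k"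
  using assms unfolding alg1_step_def by (auto split: if_splits)

lemma alg1_x_nonneg_le:
  assumes "finite N" "0 < p" "distinct stream"
  shows "0 \<le> alg1_x N f k p c \<tau> stream w" "alg1_x N f k p c \<tau> stream w \<le> p"
proof -
  have "(\<lambda>_. 0) \<le> alg1_x N f k p c \<tau> stream"
    using foldl_alg1_step_increasing[OF assms(1,2), of "\<lambda>_. 0"]
    unfolding alg1_x_def by (simp add: norm1_def)
  then show "0 \<le> alg1_x N f k p c \<tau> stream w" by (simp add: le_fun_def)
  have "alg1_x N f k p c \<tau> stream w \<le> p * of_bool (w \<in> set stream)"
    using foldl_alg1_step_le[of p stream N f k c \<tau> "\<lambda>_. 0" w] assms(2,3) unfolding alg1_x_def by simp
  then show "alg1_x N f k p c \<tau> stream w \<le> p"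
    using assms(2) by (cases "w \<in> set stream") simp_all
qed

lemma alg1_x_rejected:
  assumes "finite N" "0 < p" "u \<in> set stream"
    and "alg1_x N f k p c \<tau> stream u \<le> 0" "norm1 N (alg1_x N f k p c \<tau> stream) < real k"
  obtains x' where "\<And>w. 0 \<le> x' w" "x' \<le> alg1_x N f k p c \<tau> stream"
    "partial_F N f x' u < c * \<tau> / real k"
proof -
  let ?step = "alg1_step N f k p c \<tau>"
  obtain pre post where stream: "stream = pre @ u # post"
    using split_list[OF assms(3)] by blast
  define x' where "x' = foldl ?step (\<lambda>_. 0) pre"
  define x'' where "x'' = ?step x' u"
  have x_hat: "alg1_x N f k p c \<tau> stream = foldl ?step x'' post"
    by (simp add: alg1_x_def x'_def x''_def stream)
  have "(\<lambda>_. 0) \<le> x'" "norm1 N x' \<le> real k"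
    using foldl_alg1_step_increasing[OF assms(1,2), of "\<lambda>_. 0"]
    unfolding x'_def by (simp_all add: norm1_def)
  then have x'_nonneg: "\<And>w. 0 \<le> x' w" by (simp add: le_fun_def)
  have "x' \<le> x''" "norm1 N x'' \<le> real k"
    unfolding x''_def using alg1_step_increasing[OF assms(1,2) x'_nonneg \<open>norm1 N x' \<le> real k\<close>]
    by simp_all
  have "x'' \<le> alg1_x N f k p c \<tau> stream"
  proof -
    have "\<And>w. 0 \<le> x'' w"
      using x'_nonneg \<open>x' \<le> x''\<close> by (meson le_funD order_trans)
    then show ?thesis
      unfolding x_hat
      using foldl_alg1_step_increasing[OF assms(1,2) _ \<open>norm1 N x'' \<le> real k\<close>] by blast
  qed
  have below: "x' \<le> alg1_x N f k p c \<tau> stream"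
    using \<open>x' \<le> x''\<close> \<open>x'' \<le> alg1_x N f k p c \<tau> stream\<close> by (rule order_trans)
  have "norm1 N x' < real k"
    using norm1_mono[OF x'_nonneg below, where N = N] assms(5) by simp
  moreover have "x'' u \<le> x' u"
    using le_funD[OF \<open>x'' \<le> alg1_x N f k p c \<tau> stream\<close>, of u] assms(4) x'_nonneg[of u] by simp
  ultimately have "partial_F N f x' u < c * \<tau> / real k"
    unfolding x''_def by (rule alg1_step_rejects[OF assms(2)])
  with x'_nonneg below show thesis by (rule that)
qed

lemma alg1_x_partial_F_rejected:
  assumes "finite N" "submodular_on N f" "0 < p" "p < 1" "distinct stream" "set stream = N"
    and "u \<in> N" "alg1_x N f k p c \<tau> stream u = 0" "norm1 N (alg1_x N f k p c \<tau> stream) < real k"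
  shows "partial_F N f (alg1_x N f k p c \<tau> stream) u \<le> c * \<tau> / real k"
proof -
  have "u \<in> set stream" "alg1_x N f k p c \<tau> stream u \<le> 0"
    using assms(6-8) by auto
  then obtain x' where x': "\<And>w. 0 \<le> x' w" "x' \<le> alg1_x N f k p c \<tau> stream"
    "partial_F N f x' u < c * \<tau> / real k"
    using alg1_x_rejected[OF assms(1,3) _ _ assms(9)] by blast
  have "x' w \<le> alg1_x N f k p c \<tau> stream w" "alg1_x N f k p c \<tau> stream w \<le> 1" for w
    using le_funD[OF x'(2)] alg1_x_nonneg_le(2)[OF assms(1,3,5), of f k c \<tau> w] assms(4) by auto
  then have "partial_F N f (alg1_x N f k p c \<tau> stream) u \<le> partial_F N f x' u"
    using x'(1) by (intro partial_F_antimono[OF assms(1,2,7)]) blast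
  with x'(3) show ?thesis by simp
qed

theorem lemma3p5:
  fixes N :: "'a set" and f :: "'a set \<Rightarrow> real" and k :: nat
    and p c \<tau> :: real and stream :: "'a list" and OPT :: "'a set"
  assumes "finite N"
    and "\<And>A. A \<subseteq> N \<Longrightarrow> f A \<ge> 0"
    and "submodular_on N f"
    and "k > 0"
    and "0 < p" and "p < 1" and "c > 0" and "\<tau> \<ge> 0"
    and "distinct stream" and "set stream = N"
    and "OPT \<subseteq> N" and "card OPT \<le> k"
    and "\<And>S. S \<subseteq> N \<Longrightarrow> card S \<le> k \<Longrightarrow> f S \<le> f OPT"
    and "norm1 N (alg1_x N f k p c \<tau> stream) < real k"
  shows "multilinear_ext N f (\<lambda>v. alg1_x N f k p c \<tau> stream v
            + indicator (OPT - supp N (alg1_x N f k p c \<tau> stream)) v)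
         \<le> multilinear_ext N f (alg1_x N f k p c \<tau> stream) + c * \<tau>"
proof -
  define x where "x = alg1_x N f k p c \<tau> stream"
  define S where "S = OPT - supp N x"
  have x_bounds: "0 \<le> x w \<and> x w \<le> 1" for w
    using alg1_x_nonneg_le[OF assms(1,5,9), of f k c \<tau> w] assms(6) unfolding x_def by linarith
  have S: "S \<subseteq> N" "finite S" "\<And>w. w \<in> S \<Longrightarrow> x w = 0"
    using assms(1,11) x_bounds by (auto simp: S_def supp_def intro: finite_subset order.antisym)
  have "partial_F N f x u \<le> c * \<tau> / real k" if "u \<in> S" for u
    using alg1_x_partial_F_rejected[OF assms(1,3,5,6,9,10)] S that assms(14) unfolding x_def by blast
  then have "(\<Sum>u\<in>S. partial_F N f x u) \<le> real (card S) * (c * \<tau> / real k)"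
    using sum_mono[of S _ "\<lambda>_. c * \<tau> / real k"] by simp
  also have "\<dots> \<le> real k * (c * \<tau> / real k)"
    using card_mono[OF finite_subset[OF assms(11,1)], of S] assms(7,8,12)
    by (intro mult_right_mono) (auto simp: S_def)
  also have "\<dots> = c * \<tau>" using assms(4) by simp
  finally have "(\<Sum>u\<in>S. partial_F N f x u) \<le> c * \<tau>" .
  moreover have "multilinear_ext N f (\<lambda>v. x v + indicator S v)
      \<le> multilinear_ext N f x + (\<Sum>u\<in>S. partial_F N f x u)"
    using x_bounds S(3) by (intro multilinear_ext_add_indicator_le[OF assms(1,3) S(1)])
  ultimately show ?thesis unfolding x_def S_def by linarith
qed

end
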